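(* Let $r\ge2$, $\ell\in\mathcal M^1(\mathcal R_r)$ and $\epsilon>0$. If $\ell^i\le\epsilon$ for some $i\in[r]$, then $\ell^j>-\log(\exp(\epsilon)-1)$ for every $j\in[r]\setminus\{i\}$.
   Context: $\mathcal R_r$ is the rose with one vertex and $r$ loop edges identified with $[r]=\{1,\dots,r\}$; a length function is $\ell=(\ell^1,\dots,\ell^r)\in\mathbb R^r_{>0}$. The entropy is $\mathfrak h_{\mathcal R_r}(\ell)=\lim_{t\to\infty}\frac1t\log\#\{\gamma:\ell(\gamma)\le t\}$ over based circuits $\gamma$ (cyclically reduced closed edge paths in the oriented petals), and $\mathcal M^1(\mathcal R_r)=\{\ell:\mathfrak h_{\mathcal R_r}(\ell)=1\}$. *)

theory Defs
  imports Complex_Main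
begin

text \<open>The rose R_r: one vertex, petals indexed by {1..r}. An oriented edge is a pair
  (i, s) with i the petal and s the orientation (True = positive, False = inverse).
  An edge path is a list of oriented edges; every edge path in the rose is closed.\<close>

type_synonym rose_path = "(nat \<times> bool) list"

definition inverse_edges :: "nat \<times> bool \<Rightarrow> nat \<times> bool \<Rightarrow> bool" where
  "inverse_edges e f \<longleftrightarrow> fst e = fst f \<and> snd e \<noteq> snd f"

definition based_circuit :: "nat \<Rightarrow> rose_path \<Rightarrow> bool" where
  "based_circuit r \<gamma> \<longleftrightarrow>
     \<gamma> \<noteq> [] \<and> (\<forall>e\<in>set \<gamma>. fst e \<in> {1..r}) \<and>
     (\<forall>k. Suc k < length \<gamma> \<longrightarrow> \<not> inverse_edges (\<gamma> ! k) (\<gamma> ! Suc k)) \<and>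
     \<not> inverse_edges (last \<gamma>) (hd \<gamma>)"

definition rose_length :: "(nat \<Rightarrow> real) \<Rightarrow> rose_path \<Rightarrow> real" where
  "rose_length L \<gamma> = sum_list (map (\<lambda>e. L (fst e)) \<gamma>)"

definition rose_entropy :: "nat \<Rightarrow> (nat \<Rightarrow> real) \<Rightarrow> real" where
  "rose_entropy r L =
     Lim at_top (\<lambda>t::real. ln (real (card {\<gamma>. based_circuit r \<gamma> \<and> rose_length L \<gamma> \<le> t})) / t)"

text \<open>Length functions are positive on the petals {1..r} (values elsewhere are irrelevant).\<close>
definition rose_M1 :: "nat \<Rightarrow> (nat \<Rightarrow> real) set" where
  "rose_M1 r = {L. (\<forall>i\<in>{1..r}. 0 < L i) \<and> rose_entropy r L = 1}"

end

theory Submission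
  imports Defs "HOL-Real_Asymp.Real_Asymp"
begin

text \<open>Suppose \<open>L j \<le> - ln (exp eps - 1)\<close>. Together with \<open>L i \<le> eps\<close> this gives
  \<open>exp (- L i) + exp (- L j) > 1\<close>, so even \<open>exp (- c * L i) + exp (- c * L j) \<ge> 1\<close> for some
  \<open>c > 1\<close>. Splitting off the first letter shows that the positive words in the petals \<open>i\<close> and
  \<open>j\<close> of length at most \<open>t\<close> number at least \<open>exp (c * (t - const))\<close>. They are reduced words,
  whose count is submultiplicative up to a constant factor, so by Fekete's lemma it has an
  exponential growth rate, which is then at least \<open>c\<close>. Appending one letter closes every
  reduced word to a based circuit, so circuits have the same growth rate, i.e. the entropy is at
  least \<open>c > 1\<close>, contradicting \<open>L \<in> rose_M1 r\<close>.\<close>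

lemma subadditive_le_mult:
  fixes G :: "real \<Rightarrow> real"
  assumes sub: "\<And>s t. 0 \<le> s \<Longrightarrow> 0 \<le> t \<Longrightarrow> G (s + t) \<le> G s + G t" and "0 \<le> T"
  shows "G (real (Suc n) * T) \<le> real (Suc n) * G T"
proof (induction n)
  case (Suc n)
  have "G (real (Suc (Suc n)) * T) = G (real (Suc n) * T + T)"
    by (simp add: algebra_simps)
  also have "\<dots> \<le> G (real (Suc n) * T) + G T"
    using sub \<open>0 \<le> T\<close> by simp
  finally show ?case
    using Suc by (simp add: algebra_simps)
qed simp

lemma subadditive_le_linear:
  fixes G :: "real \<Rightarrow> real"
  assumes mono: "\<And>s t. 0 \<le> s \<Longrightarrow> s \<le> t \<Longrightarrow> G s \<le> G t"
    and sub: "\<And>s t. 0 \<le> s \<Longrightarrow> 0 \<le> t \<Longrightarrow> G (s + t) \<le> G s + G t"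
    and nonneg: "\<And>t. 0 \<le> t \<Longrightarrow> 0 \<le> G t"
    and "0 < T" "T \<le> t"
  shows "G t \<le> (t / T + 1) * G T"
proof -
  define n where "n = nat \<lfloor>t / T\<rfloor> - 1"
  have "1 \<le> t / T"
    using assms(4,5) by simp
  then have n: "real (Suc n) = of_int \<lfloor>t / T\<rfloor>"
    unfolding n_def by linarith
  have quot: "real (Suc n) \<le> t / T" "t / T < real (Suc n) + 1"
    using n of_int_floor_le[of "t / T"] real_of_int_floor_add_one_gt[of "t / T"] by linarith+
  then have nT: "real (Suc n) * T \<le> t" "t - real (Suc n) * T \<le> T"
    using assms(4) by (simp_all add: field_simps)
  have "G t = G (real (Suc n) * T + (t - real (Suc n) * T))"
    by simp
  also have "\<dots> \<le> G (real (Suc n) * T) + G (t - real (Suc n) * T)"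
    using nT assms(4) by (intro sub) simp_all
  also have "\<dots> \<le> real (Suc n) * G T + G T"
    using subadditive_le_mult[OF sub, of T n] mono[of "t - real (Suc n) * T" T] nT assms(4)
    by simp
  also have "\<dots> = (real (Suc n) + 1) * G T"
    by (simp add: algebra_simps)
  also have "\<dots> \<le> (t / T + 1) * G T"
    using quot(1) nonneg[of T] assms(4) by (intro mult_right_mono) simp_all
  finally show ?thesis .
qed

text \<open>Fekete's lemma; the limit is the infimum of \<open>G t / t\<close> over \<open>t > 0\<close>.\<close>
lemma subadditive_growth_rate_exists:
  fixes G :: "real \<Rightarrow> real"
  assumes mono: "\<And>s t. 0 \<le> s \<Longrightarrow> s \<le> t \<Longrightarrow> G s \<le> G t"
    and sub: "\<And>s t. 0 \<le> s \<Longrightarrow> 0 \<le> t \<Longrightarrow> G (s + t) \<le> G s + G t"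
    and nonneg: "\<And>t. 0 \<le> t \<Longrightarrow> 0 \<le> G t"
  shows "\<exists>l. ((\<lambda>t. G t / t) \<longlongrightarrow> l) at_top"
proof -
  let ?S = "(\<lambda>t. G t / t) ` {0<..}"
  have bdd: "bdd_below ?S"
    by (rule bdd_belowI[of _ 0]) (auto intro!: divide_nonneg_pos nonneg)
  have "((\<lambda>t. G t / t) \<longlongrightarrow> Inf ?S) at_top"
  proof (rule tendstoI)
    fix e :: real assume e: "0 < e"
    obtain T where T: "0 < T" "G T / T < Inf ?S + e / 2"
      using cInf_lessD[of ?S "Inf ?S + e / 2"] e by auto
    show "\<forall>\<^sub>F t in at_top. dist (G t / t) (Inf ?S) < e"
    proof (rule eventually_at_top_linorderI[of "T + 2 * G T / e + 1"])
      fix t assume t: "T + 2 * G T / e + 1 \<le> t"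
      have "0 \<le> 2 * G T / e"
        using nonneg[of T] T e by simp
      with t T have tT: "T \<le> t" "0 < t" "2 * G T / e < t"
        by linarith+
      have "G t / t \<le> (t / T + 1) * G T / t"
        using subadditive_le_linear[OF mono sub nonneg T(1) tT(1)] tT(2) by (simp add: divide_right_mono)
      also have "\<dots> = G T / T + G T / t"
        using tT T by (simp add: field_simps)
      also have "\<dots> < G T / T + e / 2"
        using tT e by (simp add: field_simps)
      finally have "G t / t < Inf ?S + e"
        using T(2) by linarith
      moreover have "Inf ?S \<le> G t / t"
        using bdd tT(2) by (intro cInf_lower) auto
      ultimately show "dist (G t / t) (Inf ?S) < e"
        by (simp add: dist_real_def)
    qed
  qed
  then show ?thesis ..
qed

definition petal_letters :: "nat \<Rightarrow> (nat \<times> bool) set" where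
  "petal_letters r = {1..r} \<times> UNIV"

definition reduced :: "rose_path \<Rightarrow> bool" where
  "reduced w \<longleftrightarrow> successively (\<lambda>e f. \<not> inverse_edges e f) w"

definition reduced_words :: "nat \<Rightarrow> (nat \<Rightarrow> real) \<Rightarrow> real \<Rightarrow> rose_path set" where
  "reduced_words r L t = {w. set w \<subseteq> petal_letters r \<and> reduced w \<and> rose_length L w \<le> t}"

definition circuits_upto :: "nat \<Rightarrow> (nat \<Rightarrow> real) \<Rightarrow> real \<Rightarrow> rose_path set" where
  "circuits_upto r L t = {\<gamma>. based_circuit r \<gamma> \<and> rose_length L \<gamma> \<le> t}"

lemma rose_entropy_circuits_upto:
  "rose_entropy r L = Lim at_top (\<lambda>t. ln (real (card (circuits_upto r L t))) / t)"
  by (simp add: rose_entropy_def circuits_upto_def)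

lemma rose_length_Nil [simp]: "rose_length L [] = 0"
  by (simp add: rose_length_def)

lemma rose_length_Cons [simp]: "rose_length L (e # w) = L (fst e) + rose_length L w"
  by (simp add: rose_length_def)

lemma rose_length_append [simp]: "rose_length L (u @ v) = rose_length L u + rose_length L v"
  by (simp add: rose_length_def)

lemma finite_petal_letters: "finite (petal_letters r)"
  by (simp add: petal_letters_def)

lemma card_petal_letters: "card (petal_letters r) = 2 * r"
  by (simp add: petal_letters_def card_cartesian_product)

lemma reduced_appendD: "reduced (u @ v) \<Longrightarrow> reduced u \<and> reduced v"
  by (simp add: reduced_def successively_append_iff)

lemma length_mult_le_rose_length:
  assumes "\<forall>e\<in>set w. \<mu> \<le> L (fst e)"
  shows "\<mu> * real (length w) \<le> rose_length L w"
  using assms by (induction w) (auto simp: algebra_simps intro: add_mono)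

lemma finite_words_rose_length_le:
  assumes "finite A" "0 < \<mu>" "\<forall>e\<in>A. \<mu> \<le> L (fst e)"
  shows "finite {w. set w \<subseteq> A \<and> rose_length L w \<le> t}"
proof (rule finite_subset)
  show "{w. set w \<subseteq> A \<and> rose_length L w \<le> t} \<subseteq> {w. set w \<subseteq> A \<and> length w \<le> nat \<lfloor>t / \<mu>\<rfloor>}"
  proof safe
    fix w assume w: "set w \<subseteq> A" "rose_length L w \<le> t"
    then have "\<mu> * real (length w) \<le> t"
      using length_mult_le_rose_length[of w \<mu> L] assms(3) by fastforce
    then have "real (length w) \<le> t / \<mu>"
      using assms(2) by (simp add: field_simps)
    then show "length w \<le> nat \<lfloor>t / \<mu>\<rfloor>"
      by (simp add: le_nat_floor)
  qed
  show "finite {w. set w \<subseteq> A \<and> length w \<le> nat \<lfloor>t / \<mu>\<rfloor>}"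
    using finite_lists_length_le[OF assms(1)] .
qed

lemma finite_reduced_words:
  assumes "\<forall>k\<in>{1..r}. 0 < L k"
  shows "finite (reduced_words r L t)"
proof -
  define \<mu> where "\<mu> = Min (insert 1 (L ` {1..r}))"
  have fin: "finite (insert 1 (L ` {1..r}))"
    by simp
  have "0 < \<mu>"
    using Min_in[OF fin] assms by (auto simp: \<mu>_def)
  moreover have "\<forall>e\<in>petal_letters r. \<mu> \<le> L (fst e)"
  proof
    fix e assume "e \<in> petal_letters r"
    then have "L (fst e) \<in> insert 1 (L ` {1..r})"
      by (auto simp: petal_letters_def)
    then show "\<mu> \<le> L (fst e)"
      unfolding \<mu>_def by (rule Min_le[OF fin])
  qed
  ultimately have "finite {w. set w \<subseteq> petal_letters r \<and> rose_length L w \<le> t}"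
    by (rule finite_words_rose_length_le[OF finite_petal_letters])
  then show ?thesis
    by (rule finite_subset[rotated]) (auto simp: reduced_words_def)
qed

lemma Nil_in_reduced_words: "0 \<le> t \<Longrightarrow> [] \<in> reduced_words r L t"
  by (simp add: reduced_words_def reduced_def)

lemma reduced_words_mono: "s \<le> t \<Longrightarrow> reduced_words r L s \<subseteq> reduced_words r L t"
  by (auto simp: reduced_words_def)

lemma card_reduced_words_pos:
  assumes "\<forall>k\<in>{1..r}. 0 < L k" "0 \<le> t"
  shows "0 < card (reduced_words r L t)"
  using Nil_in_reduced_words[OF assms(2)] finite_reduced_words[OF assms(1)]
  by (auto simp: card_gt_0_iff)

lemma rose_length_split:
  assumes "0 \<le> s" "s < rose_length L w"
  shows "\<exists>u e v. w = u @ e # v \<and> rose_length L u \<le> s \<and> s < rose_length L u + L (fst e)"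
  using assms
proof (induction w arbitrary: s)
  case (Cons a w)
  show ?case
  proof (cases "s < L (fst a)")
    case True
    then show ?thesis
      using Cons.prems by (intro exI[of _ "[]"] exI[of _ a] exI[of _ w]) auto
  next
    case False
    with Cons.prems obtain u e v where "w = u @ e # v" "rose_length L u \<le> s - L (fst a)"
      "s - L (fst a) < rose_length L u + L (fst e)"
      using Cons.IH[of "s - L (fst a)"] by auto
    then show ?thesis
      by (intro exI[of _ "a # u"] exI[of _ e] exI[of _ v]) auto
  qed
qed simp

text \<open>A reduced word of length at most \<open>s + t\<close> either has length at most \<open>s\<close> or splits as
  \<open>u @ e # v\<close> where \<open>u\<close> is the longest prefix of length at most \<open>s\<close>; then \<open>v\<close> has length at most \<open>t\<close>.\<close>
lemma card_reduced_words_add: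
  assumes "\<forall>k\<in>{1..r}. 0 < L k" "0 \<le> s" "0 \<le> t"
  shows "real (card (reduced_words r L (s + t)))
    \<le> real (2 * r + 1) * real (card (reduced_words r L s)) * real (card (reduced_words r L t))"
proof -
  let ?W = "reduced_words r L"
  let ?glue = "\<lambda>(u, e, v). u @ e # v"
  have fin: "finite (?W x)" for x
    using finite_reduced_words[OF assms(1)] .
  have cover: "?W (s + t) \<subseteq> ?W s \<union> ?glue ` (?W s \<times> petal_letters r \<times> ?W t)"
  proof
    fix w assume w: "w \<in> ?W (s + t)"
    show "w \<in> ?W s \<union> ?glue ` (?W s \<times> petal_letters r \<times> ?W t)"
    proof (cases "rose_length L w \<le> s")
      case True
      with w show ?thesis by (auto simp: reduced_words_def)
    next
      case False
      then obtain u e v where uev: "w = u @ e # v" "rose_length L u \<le> s"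
        "s < rose_length L u + L (fst e)"
        using rose_length_split[OF assms(2), of L w] by auto
      have "reduced u" "reduced v"
        using w uev(1) reduced_appendD[of u "e # v"] reduced_appendD[of "[e]" v]
        by (auto simp: reduced_words_def)
      with w uev have "(u, e, v) \<in> ?W s \<times> petal_letters r \<times> ?W t"
        by (auto simp: reduced_words_def)
      then show ?thesis
        using uev(1) by force
    qed
  qed
  have "card (?W (s + t)) \<le> card (?W s \<union> ?glue ` (?W s \<times> petal_letters r \<times> ?W t))"
    by (rule card_mono[OF _ cover]) (use fin finite_petal_letters in auto)
  also have "\<dots> \<le> card (?W s) + card (?glue ` (?W s \<times> petal_letters r \<times> ?W t))"
    by (rule card_Un_le)
  also have "\<dots> \<le> card (?W s) + card (?W s \<times> petal_letters r \<times> ?W t)"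
    using card_image_le[of "?W s \<times> petal_letters r \<times> ?W t" ?glue] fin finite_petal_letters
    by simp
  also have "\<dots> = card (?W s) + card (?W s) * (2 * r) * card (?W t)"
    by (simp add: card_cartesian_product card_petal_letters)
  also have "\<dots> \<le> card (?W s) * card (?W t) + card (?W s) * (2 * r) * card (?W t)"
    using card_reduced_words_pos[OF assms(1,3)] by simp
  also have "\<dots> = (2 * r + 1) * card (?W s) * card (?W t)"
    by (simp add: algebra_simps)
  finally show ?thesis
    by (metis of_nat_le_iff of_nat_mult)
qed

lemma exists_connecting_letter:
  assumes "2 \<le> r"
  shows "\<exists>c\<in>petal_letters r. \<not> inverse_edges e c \<and> \<not> inverse_edges c f"
proof -
  have petals: "(1, b) \<in> petal_letters r" "(2, b) \<in> petal_letters r" for b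
    using assms by (auto simp: petal_letters_def)
  consider "fst f \<noteq> 1" | "fst e \<noteq> 1" | "fst e = 1" "fst f = 1"
    by blast
  then show ?thesis
  proof cases
    case 1
    then show ?thesis
      using petals by (intro bexI[of _ "(1, snd e)"]) (auto simp: inverse_edges_def)
  next
    case 2
    then show ?thesis
      using petals by (intro bexI[of _ "(1, snd f)"]) (auto simp: inverse_edges_def)
  next
    case 3
    then show ?thesis
      using petals by (intro bexI[of _ "(2, True)"]) (auto simp: inverse_edges_def)
  qed
qed

lemma based_circuit_iff:
  "based_circuit r \<gamma> \<longleftrightarrow>
     \<gamma> \<noteq> [] \<and> set \<gamma> \<subseteq> petal_letters r \<and> reduced \<gamma> \<and> \<not> inverse_edges (last \<gamma>) (hd \<gamma>)"
  by (auto simp: based_circuit_def reduced_def successively_conv_nth petal_letters_def)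

lemma circuits_upto_subset: "circuits_upto r L t \<subseteq> reduced_words r L t"
  by (auto simp: circuits_upto_def reduced_words_def based_circuit_iff)

text \<open>Closing a reduced word by one connecting letter makes it a based circuit, and the letter
  can be dropped again, so the closing map is injective (this also covers the empty word).\<close>
lemma card_reduced_words_le_circuits:
  assumes "2 \<le> r" "\<forall>k\<in>{1..r}. 0 < L k" "\<forall>k\<in>{1..r}. L k \<le> M"
  shows "card (reduced_words r L t) \<le> card (circuits_upto r L (t + M))"
proof -
  define close where "close w =
    w @ [SOME c. c \<in> petal_letters r \<and> \<not> inverse_edges (last w) c \<and> \<not> inverse_edges c (hd w)]"
    for w
  have close: "\<exists>c. close w = w @ [c] \<and> c \<in> petal_letters r \<and> \<not> inverse_edges (last w) c
      \<and> \<not> inverse_edges c (hd w)" for w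
    using someI_ex[OF exists_connecting_letter[OF assms(1), of "last w" "hd w", unfolded Bex_def]]
    by (auto simp: close_def)
  have "inj_on close (reduced_words r L t)"
    by (rule inj_onI) (metis butlast_snoc close)
  moreover have "close ` reduced_words r L t \<subseteq> circuits_upto r L (t + M)"
  proof safe
    fix w assume w: "w \<in> reduced_words r L t"
    obtain c where c: "close w = w @ [c]" "c \<in> petal_letters r" "\<not> inverse_edges (last w) c"
      "\<not> inverse_edges c (hd w)"
      using close by blast
    have "L (fst c) \<le> M"
      using c(2) assms(3) by (auto simp: petal_letters_def)
    moreover have "\<not> inverse_edges c (hd (w @ [c]))"
      using c(4) by (cases w) (auto simp: inverse_edges_def)
    ultimately show "close w \<in> circuits_upto r L (t + M)"
      using w c(1-3)
      by (auto simp: circuits_upto_def reduced_words_def based_circuit_iff reduced_def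
          successively_append_iff)
  qed
  moreover have "finite (circuits_upto r L (t + M))"
    using finite_subset[OF circuits_upto_subset finite_reduced_words[OF assms(2)]] .
  ultimately show ?thesis
    by (rule card_inj_on_le)
qed

lemma reduced_words_growth_rate_exists:
  assumes "\<forall>k\<in>{1..r}. 0 < L k"
  shows "\<exists>l. ((\<lambda>t. ln (real (card (reduced_words r L t))) / t) \<longlongrightarrow> l) at_top"
proof -
  define B where "B t = real (card (reduced_words r L t))" for t
  define K where "K = real (2 * r + 1)"
  have B1: "1 \<le> B t" if "0 \<le> t" for t
    using card_reduced_words_pos[OF assms that] by (simp add: B_def)
  have K1: "1 \<le> K"
    by (simp add: K_def)
  have KB1: "1 \<le> K * B t" if "0 \<le> t" for t
    using mult_mono[of 1 K 1 "B t"] K1 B1[OF that] by simp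
  have "\<exists>l. ((\<lambda>t. ln (K * B t) / t) \<longlongrightarrow> l) at_top"
  proof (rule subadditive_growth_rate_exists)
    fix s t :: real assume "0 \<le> s" "s \<le> t"
    then have "B s \<le> B t"
      unfolding B_def
      using card_mono[OF finite_reduced_words[OF assms] reduced_words_mono] by simp
    then have "K * B s \<le> K * B t"
      using K1 by (simp add: mult_left_mono)
    then show "ln (K * B s) \<le> ln (K * B t)"
      using KB1[of s] \<open>0 \<le> s\<close> by simp
  next
    fix s t :: real assume st: "0 \<le> s" "0 \<le> t"
    have "B (s + t) \<le> K * B s * B t"
      using card_reduced_words_add[OF assms st] by (simp add: B_def K_def)
    then have "K * B (s + t) \<le> (K * B s) * (K * B t)"
      using mult_left_mono[of "B (s + t)" "K * B s * B t" K] K1 by (simp add: algebra_simps)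
    then have "ln (K * B (s + t)) \<le> ln ((K * B s) * (K * B t))"
      using KB1[of s] KB1[of t] KB1[of "s + t"] st by simp
    also have "\<dots> = ln (K * B s) + ln (K * B t)"
      using KB1[of s] KB1[of t] st by (intro ln_mult_pos) auto
    finally show "ln (K * B (s + t)) \<le> ln (K * B s) + ln (K * B t)" .
  next
    fix t :: real assume "0 \<le> t"
    then show "0 \<le> ln (K * B t)"
      using KB1 by simp
  qed
  then obtain l where lim: "((\<lambda>t. ln (K * B t) / t) \<longlongrightarrow> l) at_top" ..
  have "((\<lambda>t. ln K / t) \<longlongrightarrow> 0) at_top"
    by real_asymp
  from tendsto_diff[OF lim this]
  have "((\<lambda>t. ln (K * B t) / t - ln K / t) \<longlongrightarrow> l) at_top"
    by simp
  moreover have "\<forall>\<^sub>F t in at_top. ln (K * B t) / t - ln K / t = ln (B t) / t"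
    using eventually_ge_at_top[of 0]
  proof eventually_elim
    case (elim t)
    then show ?case
      using K1 B1[OF elim] by (simp add: ln_mult_pos add_divide_distrib)
  qed
  ultimately have "((\<lambda>t. ln (B t) / t) \<longlongrightarrow> l) at_top"
    by (rule Lim_transform_eventually)
  then show ?thesis
    unfolding B_def ..
qed

text \<open>Every reduced word closes up to a circuit at cost at most \<open>M\<close>, so the circuit count is
  squeezed between the reduced-word counts at \<open>t - M\<close> and at \<open>t\<close>.\<close>
lemma rose_entropy_eq_growth_rate:
  assumes "2 \<le> r" "\<forall>k\<in>{1..r}. 0 < L k"
    and lim: "((\<lambda>t. ln (real (card (reduced_words r L t))) / t) \<longlongrightarrow> l) at_top"
  shows "rose_entropy r L = l"
proof -
  define B where "B t = real (card (reduced_words r L t))" for t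
  define N where "N t = real (card (circuits_upto r L t))" for t
  define M where "M = Max (L ` {1..r})"
  have LM: "\<forall>k\<in>{1..r}. L k \<le> M"
    by (simp add: M_def)
  have M: "0 < M"
  proof -
    have "0 < L 1" "L 1 \<le> M"
      using assms(1,2) LM by simp_all
    then show ?thesis
      by linarith
  qed
  have B1: "1 \<le> B t" if "0 \<le> t" for t
    using card_reduced_words_pos[OF assms(2) that] by (simp add: B_def)
  have bounds: "ln (B (t - M)) / t \<le> ln (N t) / t \<and> ln (N t) / t \<le> ln (B t) / t" if "M \<le> t" for t
  proof -
    have "B (t - M) \<le> N t"
      using card_reduced_words_le_circuits[OF assms(1,2) LM, of "t - M"] by (simp add: B_def N_def)
    moreover have "N t \<le> B t"
      using card_mono[OF finite_reduced_words[OF assms(2)] circuits_upto_subset]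
      by (simp add: B_def N_def)
    ultimately show ?thesis
      using B1[of "t - M"] that M by (simp add: divide_right_mono)
  qed
  have "filterlim (\<lambda>t. t - M) at_top at_top"
    by real_asymp
  then have shifted: "((\<lambda>t. ln (B (t - M)) / (t - M)) \<longlongrightarrow> l) at_top"
    using lim unfolding B_def by (rule filterlim_compose[rotated])
  have ratio: "((\<lambda>t. (t - M) / t) \<longlongrightarrow> 1) at_top"
    by real_asymp
  have "((\<lambda>t. ln (B (t - M)) / (t - M) * ((t - M) / t)) \<longlongrightarrow> l) at_top"
    using tendsto_mult[OF shifted ratio] by simp
  moreover have "\<forall>\<^sub>F t in at_top. ln (B (t - M)) / (t - M) * ((t - M) / t) = ln (B (t - M)) / t"
    using eventually_gt_at_top[of M] by eventually_elim simp
  ultimately have lower: "((\<lambda>t. ln (B (t - M)) / t) \<longlongrightarrow> l) at_top"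
    by (rule Lim_transform_eventually)
  have "((\<lambda>t. ln (N t) / t) \<longlongrightarrow> l) at_top"
  proof (rule tendsto_sandwich[OF _ _ lower lim[folded B_def]])
    show "\<forall>\<^sub>F t in at_top. ln (B (t - M)) / t \<le> ln (N t) / t"
      using eventually_ge_at_top[of M] by eventually_elim (use bounds in blast)
    show "\<forall>\<^sub>F t in at_top. ln (N t) / t \<le> ln (B t) / t"
      using eventually_ge_at_top[of M] by eventually_elim (use bounds in blast)
  qed
  then show ?thesis
    unfolding rose_entropy_circuits_upto N_def by (rule tendsto_Lim[rotated]) simp
qed

definition positive_words :: "nat \<Rightarrow> nat \<Rightarrow> (nat \<Rightarrow> real) \<Rightarrow> real \<Rightarrow> rose_path set" where
  "positive_words i j L t = {w. set w \<subseteq> {(i, True), (j, True)} \<and> rose_length L w \<le> t}"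

lemma reduced_if_positive: "\<forall>e\<in>set w. snd e \<Longrightarrow> reduced w"
  by (induction w rule: induct_list012) (auto simp: reduced_def inverse_edges_def)

lemma positive_words_subset:
  assumes "i \<in> {1..r}" "j \<in> {1..r}"
  shows "positive_words i j L t \<subseteq> reduced_words r L t"
proof
  fix w assume w: "w \<in> positive_words i j L t"
  then have "\<forall>e\<in>set w. snd e"
    by (auto simp: positive_words_def)
  with w assms show "w \<in> reduced_words r L t"
    using reduced_if_positive[of w]
    by (auto simp: positive_words_def reduced_words_def petal_letters_def)
qed

lemma finite_positive_words:
  assumes "0 < L i" "0 < L j"
  shows "finite (positive_words i j L t)"
  unfolding positive_words_def
  by (rule finite_words_rose_length_le[of _ "min (L i) (L j)"]) (use assms in auto)

lemma card_positive_words_rec: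
  assumes "i \<noteq> j" "0 < L i" "0 < L j"
  shows "card (positive_words i j L (t - L i)) + card (positive_words i j L (t - L j))
    \<le> card (positive_words i j L t)"
proof -
  let ?P = "positive_words i j L"
  have "card (?P (t - L i)) + card (?P (t - L j))
      = card (Cons (i, True) ` ?P (t - L i) \<union> Cons (j, True) ` ?P (t - L j))"
    using assms finite_positive_words[OF assms(2,3)]
    by (subst card_Un_disjoint) (auto simp: card_image)
  also have "\<dots> \<le> card (?P t)"
    by (rule card_mono[OF finite_positive_words[OF assms(2,3)]]) (auto simp: positive_words_def)
  finally show ?thesis .
qed

text \<open>Splitting off the first letter gives \<open>P t \<ge> P (t - L i) + P (t - L j)\<close>; the bound then
  propagates by induction over \<open>t\<close> in steps of the shorter petal length.\<close>
lemma card_positive_words_ge: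
  assumes "i \<noteq> j" "0 < L i" "0 < L j" "0 \<le> c"
    and exp_sum: "1 \<le> exp (- c * L i) + exp (- c * L j)"
    and "0 \<le> t"
  shows "exp (c * (t - max (L i) (L j))) \<le> real (card (positive_words i j L t))"
proof -
  define m where "m = max (L i) (L j)"
  define \<mu> where "\<mu> = min (L i) (L j)"
  have "0 < \<mu>"
    using assms(2,3) by (simp add: \<mu>_def)
  have "exp (c * (t - m)) \<le> real (card (positive_words i j L t))"
    if "0 \<le> t" "t < real n * \<mu>" for n t
    using that
  proof (induction n arbitrary: t)
    case (Suc n)
    show ?case
    proof (cases "t < m")
      case True
      then have "exp (c * (t - m)) \<le> 1"
        using assms(4) by (simp add: mult_nonneg_nonpos)
      moreover have "[] \<in> positive_words i j L t"
        using Suc.prems by (simp add: positive_words_def)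
      then have "card (positive_words i j L t) \<noteq> 0"
        using finite_positive_words[OF assms(2,3), of t] by auto
      then have "1 \<le> real (card (positive_words i j L t))"
        by linarith
      ultimately show ?thesis
        by linarith
    next
      case False
      then have "L i \<le> t" "L j \<le> t" "t - L i < real n * \<mu>" "t - L j < real n * \<mu>"
        using Suc.prems by (auto simp: m_def \<mu>_def algebra_simps)
      then have IH: "exp (c * (t - L i - m)) \<le> real (card (positive_words i j L (t - L i)))"
          "exp (c * (t - L j - m)) \<le> real (card (positive_words i j L (t - L j)))"
        using Suc.IH by simp_all
      have "exp (c * (t - m)) \<le> exp (c * (t - m)) * (exp (- c * L i) + exp (- c * L j))"
        using exp_sum by simp
      also have "\<dots> = exp (c * (t - L i - m)) + exp (c * (t - L j - m))"
        by (simp add: distrib_left exp_add[symmetric] algebra_simps)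
      finally show ?thesis
        using IH card_positive_words_rec[OF assms(1-3), of t] by linarith
    qed
  qed (use \<open>0 < \<mu>\<close> in simp)
  moreover obtain n :: nat where "t / \<mu> < real n"
    using reals_Archimedean2 by blast
  then have "t < real n * \<mu>"
    using \<open>0 < \<mu>\<close> by (simp add: field_simps)
  ultimately show ?thesis
    using \<open>0 \<le> t\<close> by (simp add: m_def)
qed

lemma rose_entropy_ge:
  assumes "2 \<le> r" "\<forall>k\<in>{1..r}. 0 < L k"
    and "i \<in> {1..r}" "j \<in> {1..r}" "i \<noteq> j" "0 \<le> c"
    and "1 \<le> exp (- c * L i) + exp (- c * L j)"
  shows "c \<le> rose_entropy r L"
proof -
  obtain l where lim: "((\<lambda>t. ln (real (card (reduced_words r L t))) / t) \<longlongrightarrow> l) at_top"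
    using reduced_words_growth_rate_exists[OF assms(2)] by blast
  define m where "m = max (L i) (L j)"
  have bound: "c * (t - m) / t \<le> ln (real (card (reduced_words r L t))) / t" if "1 \<le> t" for t
  proof -
    have "exp (c * (t - m)) \<le> real (card (positive_words i j L t))"
      using card_positive_words_ge[of i j L c t] assms that by (simp add: m_def)
    also have "\<dots> \<le> real (card (reduced_words r L t))"
      using card_mono[OF finite_reduced_words[OF assms(2)] positive_words_subset[OF assms(3,4)]]
      by simp
    finally have "ln (exp (c * (t - m))) \<le> ln (real (card (reduced_words r L t)))"
      by (rule ln_mono) simp
    then have "c * (t - m) \<le> ln (real (card (reduced_words r L t)))"
      by simp
    then show ?thesis
      using that by (simp add: divide_right_mono)
  qed
  have linear: "((\<lambda>t. c * (t - m) / t) \<longlongrightarrow> c) at_top"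
    by real_asymp
  have below: "\<forall>\<^sub>F t in at_top. c * (t - m) / t \<le> ln (real (card (reduced_words r L t))) / t"
    using eventually_ge_at_top[of 1] by eventually_elim (rule bound)
  have "c \<le> l"
    using tendsto_le[OF _ lim linear below] by simp
  then show ?thesis
    using rose_entropy_eq_growth_rate[OF assms(1,2) lim] by simp
qed

lemma exp_sum_rescale:
  fixes a b :: real
  assumes "1 < exp (- a) + exp (- b)"
  shows "\<exists>c>1. 1 < exp (- c * a) + exp (- c * b)"
proof -
  have "((\<lambda>c. exp (- c * a) + exp (- c * b)) \<longlongrightarrow> exp (- a) + exp (- b)) (at_right 1)"
    by (auto intro!: tendsto_eq_intros)
  then have "\<forall>\<^sub>F c in at_right 1. 1 < exp (- c * a) + exp (- c * b)"
    using assms by (rule order_tendstoD(1))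
  then obtain d where "d > 1" and near: "\<And>c. 1 < c \<Longrightarrow> c < d \<Longrightarrow> 1 < exp (- c * a) + exp (- c * b)"
    by (auto simp: eventually_at_right_field)
  then have "1 < (1 + d) / 2" "(1 + d) / 2 < d"
    by simp_all
  then show ?thesis
    using near by blast
qed

theorem mainTheorem16:
  fixes r :: nat and L :: "nat \<Rightarrow> real" and eps :: real and i j :: nat
  assumes "r \<ge> 2" and "L \<in> rose_M1 r" and "eps > 0"
    and "i \<in> {1..r}" and "L i \<le> eps"
    and "j \<in> {1..r}" and "j \<noteq> i"
  shows "L j > - ln (exp eps - 1)"
proof (rule ccontr)
  assume "\<not> L j > - ln (exp eps - 1)"
  then have "ln (exp eps - 1) \<le> - L j"
    by linarith
  moreover have "0 < exp eps - 1"
    using \<open>eps > 0\<close> by simp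
  ultimately have "exp eps - 1 \<le> exp (- L j)"
    by (metis exp_le_cancel_iff exp_ln)
  have pos: "\<forall>k\<in>{1..r}. 0 < L k" and entropy: "rose_entropy r L = 1"
    using assms(2) by (auto simp: rose_M1_def)
  have "exp (L i) \<le> exp eps"
    using \<open>L i \<le> eps\<close> by simp
  with \<open>exp eps - 1 \<le> exp (- L j)\<close> have "exp (L i) \<le> 1 + exp (- L j)"
    by linarith
  then have "1 \<le> exp (- L i) * (1 + exp (- L j))"
    by (simp add: exp_minus field_simps)
  also have "\<dots> < exp (- L i) + exp (- L j)"
    using pos assms(4,6) by (simp add: algebra_simps)
  finally obtain c where "c > 1" "1 < exp (- c * L i) + exp (- c * L j)"
    using exp_sum_rescale by blast
  then have "c \<le> rose_entropy r L"
    using rose_entropy_ge[OF assms(1) pos assms(4,6)] assms(7) by simp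
  with entropy \<open>c > 1\<close> show False
    by simp
qed

end
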